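(* Let $P=[n_1]+[n_2]+\cdots+[n_k]$ be a disjoint union of chains on $[n]$, labeled consecutively within chains (the $i$-th chain is $N_i+1\prec\cdots\prec N_i+n_i$ with $N_i=n_1+\cdots+n_{i-1}$). Fix $I\subseteq[k]$ and let $S\subseteq P$ be the upper set consisting of the top element of the $i$-th chain for each $i\in I$. Then $f([S,\hat 1])$ equals the number of linear extensions $\pi$ of $P$ such that, for every $i\in I$, $\pi$ fixes at least one element of the $i$-th chain (i.e. $\pi_m=m$ for some $m\in\{N_i+1,\dots,N_i+n_i\}$).
   Context: Linear extensions are permutations $\pi$ (one-line notation $\pi_1\cdots\pi_n$) with $i\prec j\Rightarrow\pi^{-1}_i<\pi^{-1}_j$. $L$ is the lattice of upper sets of $P$ ordered by inclusion, with maximum $\hat1=P$; $f([S,\hat 1])$ is the number of maximal chains in the interval $[S,\hat1]$ of $L$. *)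

theory Defs
  imports Main "HOL-Combinatorics.Permutations"
begin

definition chain_offset :: "(nat \<Rightarrow> nat) \<Rightarrow> nat \<Rightarrow> nat" where
  "chain_offset ns i = (\<Sum>j\<in>{1..<i}. ns j)"

definition ground :: "nat \<Rightarrow> (nat \<Rightarrow> nat) \<Rightarrow> nat set" where
  "ground k ns = {1..(\<Sum>i\<in>{1..k}. ns i)}"

definition chain_block :: "(nat \<Rightarrow> nat) \<Rightarrow> nat \<Rightarrow> nat set" where
  "chain_block ns i = {chain_offset ns i + 1 .. chain_offset ns i + ns i}"

definition prec :: "nat \<Rightarrow> (nat \<Rightarrow> nat) \<Rightarrow> nat \<Rightarrow> nat \<Rightarrow> bool" where
  "prec k ns a b \<longleftrightarrow> (\<exists>i\<in>{1..k}. a \<in> chain_block ns i \<and> b \<in> chain_block ns i \<and> a < b)"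

definition upper_set :: "nat \<Rightarrow> (nat \<Rightarrow> nat) \<Rightarrow> nat set \<Rightarrow> bool" where
  "upper_set k ns U \<longleftrightarrow> U \<subseteq> ground k ns \<and> (\<forall>a\<in>U. \<forall>b. prec k ns a b \<longrightarrow> b \<in> U)"

definition interval_top :: "nat \<Rightarrow> (nat \<Rightarrow> nat) \<Rightarrow> nat set \<Rightarrow> nat set set" where
  "interval_top k ns S = {U. upper_set k ns U \<and> S \<subseteq> U \<and> U \<subseteq> ground k ns}"

definition f_interval :: "nat \<Rightarrow> (nat \<Rightarrow> nat) \<Rightarrow> nat set \<Rightarrow> nat" where
  "f_interval k ns S = card {C. subset.maxchain (interval_top k ns S) C}"

text \<open>Linear extensions: permutations pi of {1..n} (one-line notation pi 1 ... pi n)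
  with  a prec b  implying  pi^{-1} a < pi^{-1} b.\<close>
definition linear_extension :: "nat \<Rightarrow> (nat \<Rightarrow> nat) \<Rightarrow> (nat \<Rightarrow> nat) \<Rightarrow> bool" where
  "linear_extension k ns \<pi> \<longleftrightarrow> \<pi> permutes ground k ns \<and>
     (\<forall>a b. prec k ns a b \<longrightarrow> inv \<pi> a < inv \<pi> b)"

end

theory Submission
  imports Defs "HOL-Combinatorics.Multiset_Permutations" "HOL-Library.Disjoint_Sets"
begin

text \<open>
  For an upper set \<open>S\<close> of \<open>P\<close>, a maximal chain of \<open>[S, 1]\<close> adds the elements of \<open>P - S\<close> one
  at a time, each time the largest remaining element of some chain. Recording these chains gives a
  bijection with the permutations of the multiset of chain labels of \<open>P - S\<close>; when \<open>S\<close> consists of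
  the tops of the chains \<open>i \<in> I\<close>, this is the label multiset of \<open>P\<close> with one copy of each
  \<open>i \<in> I\<close> removed.

  A linear extension \<open>\<pi>\<close> is determined in the same way by its word \<open>p \<mapsto> chain of \<pi>\<^sub>p\<close>, a
  permutation of the full label multiset, and \<open>\<pi>\<close> fixes an element of chain \<open>i\<close> iff the word has
  an occurrence of \<open>i\<close> preceded by exactly \<open>N\<^sub>i\<close> other letters. Splitting off the first letter
  shows that the words meeting these constraints for all \<open>i \<in> I\<close> satisfy the same recursion as
  the permutations of the label multiset with one copy of each \<open>i \<in> I\<close> removed; this works
  because the possible positions \<open>N\<^sub>i + 1, \<dots>, N\<^sub>i + n\<^sub>i\<close> of the constrained occurrences are
  disjoint for different chains.
\<close>

section \<open>Maximal chains in families of sets\<close>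

lemma subset_maxchain_iff:
  "subset.maxchain A M \<longleftrightarrow> subset.chain A M \<and> (\<forall>D. subset.chain A D \<longrightarrow> \<not> M \<subset> D)"
  unfolding subset.maxchain_def by blast

lemma subset_maxchain_least:
  assumes "subset.maxchain A M" "b \<in> A" "\<forall>Y\<in>A. b \<subseteq> Y"
  shows "b \<in> M"
proof (rule ccontr)
  assume "b \<notin> M"
  then have "M \<subset> insert b M"
    by blast
  moreover have "subset.chain A (insert b M)"
    using subset.maxchain_imp_chain[OF assms(1)] assms(2,3) unfolding subset_chain_def by blast
  ultimately show False
    using assms(1) unfolding subset_maxchain_iff by blast
qed

lemma subset_maxchains_singleton: "{M. subset.maxchain {a} M} = {{a}}"
proof -
  have "subset.maxchain {a} {a}"
    unfolding subset_maxchain_iff subset_chain_def by blast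
  moreover have "M = {a}" if M: "subset.maxchain {a} M" for M
  proof -
    have "M \<subseteq> {a}"
      using subset.maxchain_imp_chain[OF M] unfolding subset_chain_def by blast
    moreover have "a \<in> M"
      using subset_maxchain_least[OF M] by blast
    ultimately show ?thesis by blast
  qed
  ultimately show ?thesis by blast
qed

lemma finite_subset_maxchains:
  assumes "finite A"
  shows "finite {M. subset.maxchain A M}"
proof (rule finite_subset)
  show "{M. subset.maxchain A M} \<subseteq> Pow A"
    using subset.maxchain_imp_chain unfolding subset_chain_def by blast
qed (use assms in simp)

lemma subset_chain_mono:
  "subset.chain A M \<Longrightarrow> N \<subseteq> M \<Longrightarrow> N \<subseteq> B \<Longrightarrow> subset.chain B N"
  unfolding subset_chain_def by (meson subsetD)

lemma subset_maxchain_insert_bottom: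
  assumes "S \<in> F" "insert x S \<in> F" "x \<notin> S"
    and M: "subset.maxchain {Y \<in> F. insert x S \<subseteq> Y} M"
  shows "subset.maxchain {Y \<in> F. S \<subseteq> Y} (insert S M)"
  unfolding subset_maxchain_iff
proof (intro conjI allI impI notI)
  have chain: "subset.chain {Y \<in> F. insert x S \<subseteq> Y} M"
    using M by (rule subset.maxchain_imp_chain)
  then show "subset.chain {Y \<in> F. S \<subseteq> Y} (insert S M)"
    using assms(1) unfolding subset_chain_def by blast
  have bottom: "insert x S \<in> M"
    by (rule subset_maxchain_least[OF M]) (use assms(2) in auto)
  fix D assume D: "subset.chain {Y \<in> F. S \<subseteq> Y} D" "insert S M \<subset> D"
  have D_sub: "D \<subseteq> {Y \<in> F. S \<subseteq> Y}" and D_cmp: "\<forall>X\<in>D. \<forall>Z\<in>D. X \<subseteq> Z \<or> Z \<subseteq> X"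
    using D(1) unfolding subset_chain_def by auto
  obtain Y where Y: "Y \<in> D" "Y \<notin> insert S M"
    using psubset_imp_ex_mem[OF D(2)] by blast
  have "insert x S \<in> D"
    using psubsetD[OF D(2)] bottom by simp
  then have "Y \<subseteq> insert x S \<or> insert x S \<subseteq> Y"
    using D_cmp Y(1) by meson
  moreover have "S \<subseteq> Y" "Y \<noteq> S" "Y \<noteq> insert x S"
    using D_sub Y bottom by auto
  ultimately have "insert x S \<subseteq> Y"
    by (cases "x \<in> Y") auto
  moreover have "M \<subseteq> D" "M \<subseteq> {Y \<in> F. insert x S \<subseteq> Y}"
    using D(2) chain unfolding subset_chain_def by auto
  ultimately have "subset.chain {Y \<in> F. insert x S \<subseteq> Y} (D \<inter> {Y. insert x S \<subseteq> Y})"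
      and "M \<subset> D \<inter> {Y. insert x S \<subseteq> Y}"
    using D_sub D_cmp Y unfolding subset_chain_def by auto
  then show False
    using M unfolding subset_maxchain_iff by blast
qed

lemma subset_maxchain_remove_bottom:
  assumes M: "subset.maxchain {Y \<in> F. S \<subseteq> Y} M" and "S \<in> M" "x \<notin> S"
    and above: "M - {S} \<subseteq> {Y \<in> F. insert x S \<subseteq> Y}"
  shows "subset.maxchain {Y \<in> F. insert x S \<subseteq> Y} (M - {S})"
  unfolding subset_maxchain_iff
proof (intro conjI allI impI notI)
  have chain: "subset.chain {Y \<in> F. S \<subseteq> Y} M"
    using M by (rule subset.maxchain_imp_chain)
  then show "subset.chain {Y \<in> F. insert x S \<subseteq> Y} (M - {S})"
    by (rule subset_chain_mono[OF _ _ above]) blast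
  fix D assume D: "subset.chain {Y \<in> F. insert x S \<subseteq> Y} D" "M - {S} \<subset> D"
  have D_sub: "D \<subseteq> {Y \<in> F. insert x S \<subseteq> Y}"
    using D(1) unfolding subset_chain_def by auto
  have "subset.chain {Y \<in> F. S \<subseteq> Y} D"
    by (rule subset_chain_mono[OF D(1) order_refl]) (use D_sub in auto)
  moreover have "S \<in> {Y \<in> F. S \<subseteq> Y}" "\<forall>X\<in>D. S \<subseteq> X"
    using chain \<open>S \<in> M\<close> D_sub unfolding subset_chain_def by auto
  ultimately have "subset.chain {Y \<in> F. S \<subseteq> Y} (insert S D)"
    by (simp add: subset_chain_insert)
  moreover have "S \<notin> D"
    using D_sub \<open>x \<notin> S\<close> by auto
  then have "M \<subset> insert S D"
    using D(2) \<open>S \<in> M\<close> by auto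
  ultimately show False
    using M unfolding subset_maxchain_iff by blast
qed

lemma subset_maxchain_neq_singleton:
  assumes M: "subset.maxchain {Y \<in> F. S \<subseteq> Y} M" and "S \<in> M" "Y \<in> F" "S \<subset> Y"
  shows "M \<noteq> {S}"
proof
  assume "M = {S}"
  then have "subset.chain {Y \<in> F. S \<subseteq> Y} (insert Y M)"
    using subset.maxchain_imp_chain[OF M] assms(3,4) unfolding subset_chain_insert by auto
  moreover have "M \<subset> insert Y M"
    using \<open>M = {S}\<close> \<open>S \<subset> Y\<close> by auto
  ultimately show False
    using M unfolding subset_maxchain_iff by blast
qed

lemma subset_maxchain_remove_bottomE:
  assumes "finite F" "S \<in> F" "\<exists>Y\<in>F. S \<subset> Y"
    and step: "\<And>T. T \<in> F \<Longrightarrow> S \<subset> T \<Longrightarrow> \<exists>x\<in>T - S. insert x S \<in> F"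
    and M: "subset.maxchain {Y \<in> F. S \<subseteq> Y} M"
  obtains x where "x \<notin> S" "insert x S \<in> F"
    "subset.maxchain {Y \<in> F. insert x S \<subseteq> Y} (M - {S})"
proof -
  have M_sub: "M \<subseteq> {Y \<in> F. S \<subseteq> Y}" and M_cmp: "\<forall>X\<in>M. \<forall>Z\<in>M. X \<subseteq> Z \<or> Z \<subseteq> X"
    using subset.maxchain_imp_chain[OF M] unfolding subset_chain_def by auto
  have "S \<in> M"
    by (rule subset_maxchain_least[OF M]) (use assms(2) in auto)
  then have nonempty: "M - {S} \<noteq> {}"
    using subset_maxchain_neq_singleton[OF M] assms(3) by blast
  have "finite (M - {S})"
    using finite_subset[OF M_sub] assms(1) by simp
  then obtain T where T: "T \<in> M - {S}" "\<forall>Y\<in>M - {S}. Y \<subseteq> T \<longrightarrow> T = Y"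
    using finite_has_minimal[OF _ nonempty] by blast
  have T_least: "T \<subseteq> Y" if "Y \<in> M - {S}" for Y
  proof -
    have "T \<subseteq> Y \<or> Y \<subseteq> T"
      using M_cmp T(1) that by (meson DiffD1)
    then show ?thesis
      using T(2) that by (metis order.refl)
  qed
  have "T \<in> F" "S \<subseteq> T" "T \<noteq> S"
    using T M_sub by auto
  then obtain x where x: "x \<in> T - S" "insert x S \<in> F"
    using step by blast
  have "M - {S} \<subseteq> {Y \<in> F. insert x S \<subseteq> Y}"
  proof
    fix Y assume "Y \<in> M - {S}"
    then show "Y \<in> {Y \<in> F. insert x S \<subseteq> Y}"
      using M_sub T_least[of Y] x(1) \<open>S \<subseteq> T\<close> by auto
  qed
  moreover have "x \<notin> S"
    using x(1) by blast
  ultimately show thesis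
    using that x(2) subset_maxchain_remove_bottom[OF M \<open>S \<in> M\<close>] by blast
qed

lemma subset_maxchains_above_eq:
  assumes "finite F" "S \<in> F" "\<exists>Y\<in>F. S \<subset> Y"
    and "\<And>T. T \<in> F \<Longrightarrow> S \<subset> T \<Longrightarrow> \<exists>x\<in>T - S. insert x S \<in> F"
  shows "{M. subset.maxchain {Y \<in> F. S \<subseteq> Y} M} =
    (\<Union>x\<in>{x. x \<notin> S \<and> insert x S \<in> F}. insert S ` {M. subset.maxchain {Y \<in> F. insert x S \<subseteq> Y} M})"
proof (intro set_eqI iffI)
  fix M assume "M \<in> {M. subset.maxchain {Y \<in> F. S \<subseteq> Y} M}"
  then have M: "subset.maxchain {Y \<in> F. S \<subseteq> Y} M"
    by simp
  obtain x where "x \<notin> S" "insert x S \<in> F" "subset.maxchain {Y \<in> F. insert x S \<subseteq> Y} (M - {S})"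
    by (rule subset_maxchain_remove_bottomE[OF assms M])
  moreover have "S \<in> M"
    by (rule subset_maxchain_least[OF M]) (use assms(2) in auto)
  then have "M = insert S (M - {S})"
    by auto
  ultimately show "M \<in> (\<Union>x\<in>{x. x \<notin> S \<and> insert x S \<in> F}.
      insert S ` {M. subset.maxchain {Y \<in> F. insert x S \<subseteq> Y} M})"
    by blast
qed (use assms(2) subset_maxchain_insert_bottom in auto)

theorem card_subset_maxchains_above:
  assumes "finite F" "S \<in> F" "\<exists>Y\<in>F. S \<subset> Y"
    and "\<And>T. T \<in> F \<Longrightarrow> S \<subset> T \<Longrightarrow> \<exists>x\<in>T - S. insert x S \<in> F"
  shows "card {M. subset.maxchain {Y \<in> F. S \<subseteq> Y} M} =
    (\<Sum>x\<in>{x. x \<notin> S \<and> insert x S \<in> F}. card {M. subset.maxchain {Y \<in> F. insert x S \<subseteq> Y} M})"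
proof -
  define X where "X = {x. x \<notin> S \<and> insert x S \<in> F}"
  define MC where "MC x = {M. subset.maxchain {Y \<in> F. insert x S \<subseteq> Y} M}" for x
  have above: "M \<subseteq> {Y \<in> F. insert x S \<subseteq> Y}" if "M \<in> MC x" for x M
  proof -
    have "subset.chain {Y \<in> F. insert x S \<subseteq> Y} M"
      using that unfolding MC_def by (simp add: subset.maxchain_imp_chain)
    then show ?thesis
      unfolding subset_chain_def by simp
  qed
  have S_notin: "S \<notin> M" if "x \<in> X" "M \<in> MC x" for x M
    using above[OF that(2)] that(1) unfolding X_def by auto
  have "{M. subset.maxchain {Y \<in> F. S \<subseteq> Y} M} = (\<Union>x\<in>X. insert S ` MC x)"
    unfolding X_def MC_def by (rule subset_maxchains_above_eq[OF assms])
  moreover have "insert S ` MC x \<inter> insert S ` MC y = {}" if "x \<in> X" "y \<in> X" "x \<noteq> y" for x y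
  proof (rule ccontr)
    assume "insert S ` MC x \<inter> insert S ` MC y \<noteq> {}"
    then obtain M1 M2 where M12: "M1 \<in> MC x" "M2 \<in> MC y" "insert S M1 = insert S M2"
      by blast
    then have "M1 = M2"
      using S_notin that by (metis insert_ident)
    moreover have "insert x S \<in> M1"
      using M12(1) that(1) unfolding MC_def X_def by (auto intro: subset_maxchain_least)
    ultimately show False
      using above[OF M12(2)] \<open>y \<in> X\<close> \<open>x \<noteq> y\<close> unfolding X_def by auto
  qed
  moreover have "finite X"
  proof (rule finite_imageD)
    show "finite ((\<lambda>x. insert x S) ` X)"
      using assms(1) by (rule finite_subset[rotated]) (auto simp: X_def)
    show "inj_on (\<lambda>x. insert x S) X"
      unfolding X_def inj_on_def by blast
  qed
  moreover have "card (insert S ` MC x) = card (MC x)" if "x \<in> X" for x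
    using S_notin[OF that] by (intro card_image inj_onI) (metis insert_ident)
  ultimately show ?thesis
    using assms(1) by (simp add: card_UN_disjoint finite_subset_maxchains MC_def flip: X_def)
qed

section \<open>Words with prescribed occurrences\<close>

lemma card_permutations_of_multiset_filter_Cons:
  assumes "A \<noteq> {#}"
  shows "card {w \<in> permutations_of_multiset A. P w} =
    (\<Sum>x\<in>set_mset A. card {w \<in> permutations_of_multiset (A - {#x#}). P (x # w)})"
proof -
  have split: "{w \<in> permutations_of_multiset A. P w} =
     (\<Union>x\<in>set_mset A. (#) x ` {w \<in> permutations_of_multiset (A - {#x#}). P (x # w)})"
    using permutations_of_multiset_nonempty[OF assms] by auto
  show ?thesis
    unfolding split by (subst card_UN_disjoint) (auto simp: card_image)
qed

lemma card_permutations_of_multiset_rec: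
  assumes "A \<noteq> {#}"
  shows "card (permutations_of_multiset A) =
    (\<Sum>x\<in>set_mset A. card (permutations_of_multiset (A - {#x#})))"
  using card_permutations_of_multiset_filter_Cons[OF assms, of "\<lambda>_. True"] by simp

definition occurs_after_others :: "'a list \<Rightarrow> 'a \<Rightarrow> nat \<Rightarrow> bool" where
  "occurs_after_others w a t \<longleftrightarrow>
     (\<exists>p<length w. w ! p = a \<and> length (filter (\<lambda>x. x \<noteq> a) (take p w)) = t)"

lemma occurs_after_others_Nil [simp]: "\<not> occurs_after_others [] a t"
  by (simp add: occurs_after_others_def)

lemma occurs_after_others_Cons:
  "occurs_after_others (b # w) a t \<longleftrightarrow>
     (if b = a then t = 0 \<or> occurs_after_others w a t
      else 0 < t \<and> occurs_after_others w a (t - 1))"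
  unfolding occurs_after_others_def by (auto simp: Ex_less_Suc2)

lemma occurs_after_others_in_set: "occurs_after_others w a t \<Longrightarrow> a \<in> set w"
  unfolding occurs_after_others_def by auto

lemma occurs_after_others_forced_head:
  assumes "z \<in># C" "z \<in> I" "t z = 0" "\<forall>i\<in>I - {z}. 0 < t i"
  shows "{w \<in> permutations_of_multiset C. \<forall>i\<in>I. occurs_after_others w i (t i)} =
    (#) z ` {w \<in> permutations_of_multiset (C - {#z#}). \<forall>i\<in>I - {z}. occurs_after_others w i (t i - 1)}"
    (is "?L = (#) z ` ?R")
proof (intro set_eqI iffI)
  fix w assume w: "w \<in> ?L"
  then obtain a w' where aw: "w = a # w'"
    using assms(2) by (cases w) auto
  have "a = z"
    using w assms(2,3) unfolding aw by (auto simp: occurs_after_others_Cons split: if_splits)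
  then have "w' \<in> ?R"
    using w unfolding aw by (auto simp: occurs_after_others_Cons permutations_of_multiset_Cons_iff split: if_splits)
  then show "w \<in> (#) z ` ?R"
    using aw \<open>a = z\<close> by blast
qed (use assms in \<open>auto simp: occurs_after_others_Cons permutations_of_multiset_Cons_iff\<close>)

lemma occurs_after_others_Cons_shift:
  assumes "\<forall>i\<in>I. 0 < t i"
  shows "(\<forall>i\<in>I. occurs_after_others (a # w) i (t i)) \<longleftrightarrow>
    (\<forall>i\<in>I. occurs_after_others w i (if i = a then t i else t i - 1))"
proof -
  have "occurs_after_others (a # w) i (t i) \<longleftrightarrow> occurs_after_others w i (if i = a then t i else t i - 1)"
    if "i \<in> I" for i
    using assms that by (auto simp: occurs_after_others_Cons)
  then show ?thesis by blast
qed

lemma disjoint_family_on_vimage_subset: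
  assumes "disjoint_family_on A I" "\<And>i. i \<in> I \<Longrightarrow> B i \<subseteq> f -` A i"
  shows "disjoint_family_on B I"
  using assms unfolding disjoint_family_on_def by blast

text \<open>
  The window \<open>{t i <.. t i + count C i}\<close> holds the positions (counted from 1) at which an
  occurrence of \<open>i\<close> preceded by exactly \<open>t i\<close> other letters can stand; in the application it is
  the chain block of \<open>i\<close>.
\<close>
definition disjoint_windows :: "'a multiset \<Rightarrow> ('a \<Rightarrow> nat) \<Rightarrow> 'a set \<Rightarrow> bool" where
  "disjoint_windows C t I \<longleftrightarrow> I \<subseteq> set_mset C \<and> (\<forall>i\<in>I. t i + count C i \<le> size C) \<and>
     disjoint_family_on (\<lambda>i. {t i<..t i + count C i}) I"

lemma disjoint_windows_zero_unique:
  assumes "disjoint_windows C t I" "z \<in> I" "t z = 0" "i \<in> I - {z}"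
  shows "0 < t i"
proof (rule ccontr)
  assume "\<not> 0 < t i"
  moreover have "0 < count C z" "0 < count C i"
    using assms(1,2,4) unfolding disjoint_windows_def by auto
  ultimately have "1 \<in> {t i<..t i + count C i} \<inter> {t z<..t z + count C z}"
    using assms(3) by simp
  moreover have "disjoint_family_on (\<lambda>i. {t i<..t i + count C i}) I"
    using assms(1) unfolding disjoint_windows_def by blast
  note disjoint_family_onD[OF this, of i z]
  ultimately show False
    using assms(2,4) by auto
qed

lemma disjoint_windows_remove_letter:
  assumes "disjoint_windows C t J" "a \<in># C - mset_set J"
    and "\<forall>i\<in>J. i \<noteq> a \<longrightarrow> 0 < t i"
    and "\<forall>i\<in>J. t' i = (if i = a then t i else t i - 1)"
  shows "disjoint_windows (C - {#a#}) t' J"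
proof -
  have finite: "finite J"
    using assms(1) finite_subset unfolding disjoint_windows_def by blast
  have aC: "a \<in># C"
    using assms(2) by (rule in_diffD)
  have a_count: "a \<in> J \<Longrightarrow> 1 < count C a"
    using assms(2) finite by (simp add: in_diff_count count_mset_set)
  have size: "size (C - {#a#}) = size C - 1"
    using aC by (simp add: size_Diff_singleton)
  have "J \<subseteq> set_mset (C - {#a#})"
  proof
    fix i assume "i \<in> J"
    then have "count {#a#} i < count C i"
      using assms(1) a_count unfolding disjoint_windows_def by (cases "i = a") auto
    then show "i \<in># C - {#a#}"
      by (simp only: in_diff_count)
  qed
  moreover have "t' i + count (C - {#a#}) i \<le> size (C - {#a#})" if "i \<in> J" for i
  proof (cases "i = a")
    case True
    then show ?thesis
      using assms(1,4) that aC unfolding size disjoint_windows_def by auto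
  next
    case False
    then have "0 < t i" "t' i = t i - 1" "t i + count C i \<le> size C"
      using assms that unfolding disjoint_windows_def by auto
    then show ?thesis
      using False unfolding size by simp
  qed
  moreover have "{t' i<..t' i + count (C - {#a#}) i} \<subseteq> Suc -` {t i<..t i + count C i}"
    if "i \<in> J" for i
  proof (cases "i = a")
    case False
    then have "0 < t i" "t' i = t i - 1"
      using assms(3,4) that by auto
    then show ?thesis
      using False by auto
  qed (use assms(4) that in auto)
  then have "disjoint_family_on (\<lambda>i. {t' i<..t' i + count (C - {#a#}) i}) J"
    using assms(1) unfolding disjoint_windows_def by (blast intro: disjoint_family_on_vimage_subset)
  ultimately show ?thesis
    unfolding disjoint_windows_def by blast
qed

text \<open>Pigeonhole: the disjoint windows all lie in \<open>{2..size C}\<close>.\<close>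
lemma disjoint_windows_diff_nonempty:
  assumes "disjoint_windows C t I" "C \<noteq> {#}" "\<forall>i\<in>I. 0 < t i"
  shows "C - mset_set I \<noteq> {#}"
proof -
  have I: "I \<subseteq> set_mset C" "finite I"
    using assms(1) finite_subset unfolding disjoint_windows_def by auto
  have window: "Suc (t i) \<in> {t i<..t i + count C i}" if "i \<in> I" for i
    using I that by (auto simp: Suc_le_eq)
  have "inj_on (\<lambda>i. Suc (t i)) I"
  proof (rule inj_onI)
    fix i j assume "i \<in> I" "j \<in> I" "Suc (t i) = Suc (t j)"
    moreover have "disjoint_family_on (\<lambda>i. {t i<..t i + count C i}) I"
      using assms(1) unfolding disjoint_windows_def by blast
    note disjoint_family_onD[OF this, of i j]
    ultimately show "i = j"
      using window[of i] window[of j] by auto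
  qed
  moreover have "(\<lambda>i. Suc (t i)) ` I \<subseteq> {2..size C}"
  proof (rule image_subsetI)
    fix i assume "i \<in> I"
    then have "0 < count C i" "0 < t i" "t i + count C i \<le> size C"
      using I assms(1,3) unfolding disjoint_windows_def by auto
    then have "2 \<le> Suc (t i) \<and> Suc (t i) \<le> size C"
      by linarith
    then show "Suc (t i) \<in> {2..size C}"
      by simp
  qed
  ultimately have "card I \<le> size C - 1"
    using card_inj_on_le[of _ I "{2..size C}"] by simp
  moreover have "0 < size C"
    using assms(2) nonempty_has_size by auto
  moreover have "size (C - mset_set I) = size C - card I"
    using subset_mset.order_trans[OF subset_imp_msubset_mset_set[OF I(1) finite_set_mset]
        mset_set_set_mset_msubset]
    by (simp add: size_Diff_submset)
  ultimately show ?thesis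
    by auto
qed

lemma card_occurs_after_others_forced_head:
  assumes "disjoint_windows C t I" "z \<in> I" "t z = 0"
  shows "card {w \<in> permutations_of_multiset C. \<forall>i\<in>I. occurs_after_others w i (t i)}
      = card {w \<in> permutations_of_multiset (C - {#z#}). \<forall>i\<in>I - {z}. occurs_after_others w i (t i - 1)}"
    and "disjoint_windows (C - {#z#}) (\<lambda>i. t i - 1) (I - {z})"
    and "C - {#z#} - mset_set (I - {z}) = C - mset_set I"
    and "size (C - {#z#}) < size C"
proof -
  have finite_I: "finite I"
    using assms(1) finite_subset unfolding disjoint_windows_def by blast
  have z: "z \<in># C - mset_set (I - {z})"
    using assms(1,2) finite_I unfolding disjoint_windows_def
    by (auto simp: in_diff_count count_mset_set)
  then have "z \<in># C"
    by (rule in_diffD)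
  have pos: "\<forall>i\<in>I - {z}. 0 < t i"
    using disjoint_windows_zero_unique[OF assms] by blast
  show "card {w \<in> permutations_of_multiset C. \<forall>i\<in>I. occurs_after_others w i (t i)}
      = card {w \<in> permutations_of_multiset (C - {#z#}). \<forall>i\<in>I - {z}. occurs_after_others w i (t i - 1)}"
    unfolding occurs_after_others_forced_head[OF \<open>z \<in># C\<close> assms(2,3) pos] by (simp add: card_image)
  have "disjoint_windows C t (I - {z})"
    using assms(1) disjoint_family_on_mono[of "I - {z}" I] unfolding disjoint_windows_def by auto
  then show "disjoint_windows (C - {#z#}) (\<lambda>i. t i - 1) (I - {z})"
    by (rule disjoint_windows_remove_letter[OF _ z]) (use pos in auto)
  show "C - {#z#} - mset_set (I - {z}) = C - mset_set I"
    using finite_I assms(2) by (simp add: mset_set.remove)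
  show "size (C - {#z#}) < size C"
    using \<open>z \<in># C\<close> by (simp add: size_Diff1_less)
qed

lemma card_occurs_after_others_first_letter:
  assumes "C \<noteq> {#}" "finite I" "\<forall>i\<in>I. 0 < t i"
  shows "card {w \<in> permutations_of_multiset C. \<forall>i\<in>I. occurs_after_others w i (t i)} =
    (\<Sum>a\<in>set_mset (C - mset_set I).
       card {w \<in> permutations_of_multiset (C - {#a#}).
               \<forall>i\<in>I. occurs_after_others w i (if i = a then t i else t i - 1)})"
proof -
  define shift where "shift a i = (if i = a then t i else t i - 1)" for a i
  have vanishing: "{w \<in> permutations_of_multiset (C - {#a#}). \<forall>i\<in>I. occurs_after_others w i (shift a i)} = {}"
    if "a \<in># C" "a \<notin># C - mset_set I" for a
  proof -
    have "0 < count C a" "count C a \<le> (if a \<in> I then 1 else 0)"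
      using that assms(2) by (auto simp: in_diff_count count_mset_set)
    then have "a \<in> I" "a \<notin># C - {#a#}"
      by (auto split: if_splits simp: in_diff_count simp del: count_greater_zero_iff)
    moreover have "\<not> occurs_after_others w a (shift a a)"
      if "w \<in> permutations_of_multiset (C - {#a#})" for w
      using that occurs_after_others_in_set \<open>a \<notin># C - {#a#}\<close>
      by (metis permutations_of_multisetD set_mset_mset)
    ultimately show ?thesis
      by blast
  qed
  have "card {w \<in> permutations_of_multiset C. \<forall>i\<in>I. occurs_after_others w i (t i)}
      = (\<Sum>a\<in>set_mset C. card {w \<in> permutations_of_multiset (C - {#a#}). \<forall>i\<in>I. occurs_after_others w i (shift a i)})"
    unfolding card_permutations_of_multiset_filter_Cons[OF assms(1)]
      occurs_after_others_Cons_shift[OF assms(3)] shift_def ..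
  also have "\<dots> = (\<Sum>a\<in>set_mset (C - mset_set I). card {w \<in> permutations_of_multiset (C - {#a#}). \<forall>i\<in>I. occurs_after_others w i (shift a i)})"
  proof (rule sum.mono_neutral_right)
    show "set_mset (C - mset_set I) \<subseteq> set_mset C"
      by (auto dest: in_diffD)
  qed (use vanishing in auto)
  finally show ?thesis
    unfolding shift_def .
qed

text \<open>
  Split off the first letter: if some \<open>t z = 0\<close>, the word must start with \<open>z\<close>, which settles the
  constraint on \<open>z\<close>; otherwise any letter of \<open>C - mset_set I\<close> may come first, and every other
  constraint moves one position closer.
\<close>
theorem card_permutations_occurs_after_others:
  assumes "disjoint_windows C t I"
  shows "card {w \<in> permutations_of_multiset C. \<forall>i\<in>I. occurs_after_others w i (t i)}
       = card (permutations_of_multiset (C - mset_set I))"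
  using assms
proof (induction "size C" arbitrary: C t I rule: less_induct)
  case less
  have finite_I: "finite I"
    using less.prems finite_subset unfolding disjoint_windows_def by blast
  consider "C = {#}" | z where "z \<in> I" "t z = 0" | "C \<noteq> {#}" "\<forall>i\<in>I. 0 < t i"
    by auto
  then show ?case
  proof cases
    case 1
    then show ?thesis
      using less.prems unfolding disjoint_windows_def by simp
  next
    case (2 z)
    note forced = card_occurs_after_others_forced_head[OF less.prems 2]
    show ?thesis
      using forced(1,3) less.hyps[OF forced(4,2)] by simp
  next
    case 3
    define D where "D = C - mset_set I"
    have "card {w \<in> permutations_of_multiset (C - {#a#}).
             \<forall>i\<in>I. occurs_after_others w i (if i = a then t i else t i - 1)}
        = card (permutations_of_multiset (D - {#a#}))" if a: "a \<in># D" for a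
    proof -
      have "disjoint_windows (C - {#a#}) (\<lambda>i. if i = a then t i else t i - 1) I"
        by (rule disjoint_windows_remove_letter[OF less.prems a[unfolded D_def]]) (use 3 in auto)
      moreover have "size (C - {#a#}) < size C"
        using a unfolding D_def by (auto dest: in_diffD intro: size_Diff1_less)
      moreover have "C - {#a#} - mset_set I = D - {#a#}"
        unfolding D_def by (rule diff_right_commute)
      ultimately show ?thesis
        using less.hyps[of "C - {#a#}"] by simp
    qed
    then have "card {w \<in> permutations_of_multiset C. \<forall>i\<in>I. occurs_after_others w i (t i)}
        = (\<Sum>a\<in>set_mset D. card (permutations_of_multiset (D - {#a#})))"
      unfolding card_occurs_after_others_first_letter[OF 3(1) finite_I 3(2)] D_def by simp
    also have "\<dots> = card (permutations_of_multiset D)"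
      using card_permutations_of_multiset_rec[OF disjoint_windows_diff_nonempty[OF less.prems 3]]
      unfolding D_def by simp
    finally show ?thesis
      unfolding D_def .
  qed
qed

section \<open>The disjoint union of chains\<close>

lemma chain_offset_Suc: "1 \<le> i \<Longrightarrow> chain_offset ns (Suc i) = chain_offset ns i + ns i"
  unfolding chain_offset_def by (simp add: atLeastLessThanSuc add.commute)

lemma chain_offset_mono: "i \<le> j \<Longrightarrow> chain_offset ns i \<le> chain_offset ns j"
  unfolding chain_offset_def by (rule sum_mono2) auto

lemma chain_offset_Suc_le: "1 \<le> i \<Longrightarrow> i < j \<Longrightarrow> chain_offset ns i + ns i \<le> chain_offset ns j"
  using chain_offset_Suc[of i ns] chain_offset_mono[of "Suc i" j ns] by simp

lemma ground_eq: "ground k ns = {1..chain_offset ns (Suc k)}"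
  unfolding ground_def chain_offset_def by (simp add: atLeastLessThanSuc_atLeastAtMost)

lemma finite_ground [simp]: "finite (ground k ns)"
  unfolding ground_def by simp

lemma chain_block_disjoint:
  assumes "1 \<le> i" "1 \<le> j" "x \<in> chain_block ns i" "x \<in> chain_block ns j"
  shows "i = j"
proof (rule ccontr)
  assume "i \<noteq> j"
  then consider "i < j" | "j < i"
    by linarith
  then show False
    by cases (use chain_offset_Suc_le[of _ _ ns] assms in \<open>fastforce simp: chain_block_def\<close>)+
qed

lemma chain_block_subset_ground: "i \<in> {1..k} \<Longrightarrow> chain_block ns i \<subseteq> ground k ns"
  unfolding chain_block_def ground_eq
  using chain_offset_Suc[of i ns] chain_offset_mono[of "Suc i" "Suc k" ns] by auto

lemma ground_covered_by_chain_blocks: "x \<in> ground k ns \<Longrightarrow> \<exists>i\<in>{1..k}. x \<in> chain_block ns i"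
proof (induction k)
  case 0
  then show ?case
    by (simp add: ground_def)
next
  case (Suc k)
  show ?case
  proof (cases "x \<le> chain_offset ns (Suc k)")
    case True
    then have "x \<in> ground k ns"
      using Suc.prems unfolding ground_eq by simp
    then show ?thesis
      using Suc.IH by force
  next
    case False
    then have "x \<in> chain_block ns (Suc k)"
      using Suc.prems chain_offset_Suc[of "Suc k" ns] unfolding ground_eq chain_block_def by simp
    then show ?thesis
      by force
  qed
qed

definition chain_of :: "nat \<Rightarrow> (nat \<Rightarrow> nat) \<Rightarrow> nat \<Rightarrow> nat" where
  "chain_of k ns x = (THE i. i \<in> {1..k} \<and> x \<in> chain_block ns i)"

lemma chain_of_eq: "i \<in> {1..k} \<Longrightarrow> x \<in> chain_block ns i \<Longrightarrow> chain_of k ns x = i"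
  unfolding chain_of_def by (rule the_equality) (auto intro: chain_block_disjoint)

lemma chain_of_in_chain_block:
  "x \<in> ground k ns \<Longrightarrow> chain_of k ns x \<in> {1..k} \<and> x \<in> chain_block ns (chain_of k ns x)"
  using ground_covered_by_chain_blocks[of x k ns] chain_of_eq by metis

lemma chain_block_eq: "i \<in> {1..k} \<Longrightarrow> {x \<in> ground k ns. chain_of k ns x = i} = chain_block ns i"
  using chain_block_subset_ground chain_of_eq chain_of_in_chain_block by blast

lemma prec_iff:
  "prec k ns a b \<longleftrightarrow>
     a \<in> ground k ns \<and> b \<in> ground k ns \<and> chain_of k ns a = chain_of k ns b \<and> a < b"
proof
  assume "prec k ns a b"
  then obtain i where "i \<in> {1..k}" "a \<in> chain_block ns i" "b \<in> chain_block ns i" "a < b"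
    unfolding prec_def by blast
  then show "a \<in> ground k ns \<and> b \<in> ground k ns \<and> chain_of k ns a = chain_of k ns b \<and> a < b"
    using chain_block_subset_ground chain_of_eq by blast
next
  assume "a \<in> ground k ns \<and> b \<in> ground k ns \<and> chain_of k ns a = chain_of k ns b \<and> a < b"
  then show "prec k ns a b"
    unfolding prec_def using chain_of_in_chain_block by metis
qed

section \<open>Maximal chains of intervals of upper sets\<close>

lemma upper_set_ground: "upper_set k ns (ground k ns)"
  unfolding upper_set_def using prec_iff by blast

lemma upper_set_insert_iff:
  assumes "upper_set k ns S" "x \<in> ground k ns"
  shows "upper_set k ns (insert x S) \<longleftrightarrow> (\<forall>b. prec k ns x b \<longrightarrow> b \<in> S)"
  using assms prec_iff[of k ns x] unfolding upper_set_def by auto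

lemma upper_set_insert_Max:
  assumes "upper_set k ns S" "finite B" "B \<noteq> {}" "B \<subseteq> ground k ns"
    and "\<And>b. prec k ns (Max B) b \<Longrightarrow> b \<in> S \<union> B"
  shows "upper_set k ns (insert (Max B) S)"
proof -
  have "b \<in> S" if "prec k ns (Max B) b" for b
  proof -
    have "b \<notin> B"
      using that prec_iff[of k ns "Max B" b] Max_ge[OF assms(2), of b] by auto
    then show ?thesis
      using assms(5)[OF that] by blast
  qed
  then show ?thesis
    using assms(1,4) Max_in[OF assms(2,3)] by (simp add: upper_set_insert_iff subset_iff)
qed

lemma interval_top_eq: "interval_top k ns S = {U \<in> Collect (upper_set k ns). S \<subseteq> U}"
  unfolding interval_top_def upper_set_def by blast

lemma finite_upper_sets: "finite (Collect (upper_set k ns))"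
  by (rule finite_subset[of _ "Pow (ground k ns)"]) (auto simp: upper_set_def)

lemma f_interval_ground: "f_interval k ns (ground k ns) = 1"
proof -
  have "interval_top k ns (ground k ns) = {ground k ns}"
    using upper_set_ground unfolding interval_top_def by blast
  then show ?thesis
    unfolding f_interval_def by (simp add: subset_maxchains_singleton)
qed

lemma f_interval_rec:
  assumes "upper_set k ns S" "S \<noteq> ground k ns"
  shows "f_interval k ns S =
    (\<Sum>x\<in>{x. x \<notin> S \<and> upper_set k ns (insert x S)}. f_interval k ns (insert x S))"
proof -
  have S_sub: "S \<subseteq> ground k ns"
    using assms(1) unfolding upper_set_def by blast
  have step: "\<exists>x\<in>T - S. upper_set k ns (insert x S)"
    if "upper_set k ns T" "S \<subset> T" for T
  proof
    have "finite (T - S)" "T - S \<noteq> {}" "T - S \<subseteq> ground k ns"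
      using that unfolding upper_set_def by (auto intro: finite_subset)
    moreover have "b \<in> S \<union> (T - S)" if "prec k ns (Max (T - S)) b" for b
      using \<open>upper_set k ns T\<close> that Max_in[OF calculation(1,2)] unfolding upper_set_def by blast
    ultimately show "upper_set k ns (insert (Max (T - S)) S)"
      using assms(1) by (rule_tac upper_set_insert_Max) auto
    show "Max (T - S) \<in> T - S"
      using Max_in \<open>finite (T - S)\<close> \<open>T - S \<noteq> {}\<close> by blast
  qed
  have "\<exists>Y\<in>Collect (upper_set k ns). S \<subset> Y"
    using upper_set_ground S_sub assms(2) by blast
  from card_subset_maxchains_above[OF finite_upper_sets _ this] assms(1) step
  show ?thesis
    unfolding f_interval_def interval_top_eq by (simp only: mem_Collect_eq)
qed

definition chain_labels :: "nat \<Rightarrow> (nat \<Rightarrow> nat) \<Rightarrow> nat set \<Rightarrow> nat multiset" where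
  "chain_labels k ns A = image_mset (chain_of k ns) (mset_set A)"

lemma chain_labels_remove:
  "finite A \<Longrightarrow> x \<in> A \<Longrightarrow> chain_labels k ns (A - {x}) = chain_labels k ns A - {#chain_of k ns x#}"
  unfolding chain_labels_def by (simp add: mset_set.remove)

lemma set_mset_chain_labels: "finite A \<Longrightarrow> set_mset (chain_labels k ns A) = chain_of k ns ` A"
  unfolding chain_labels_def by simp

lemma inj_on_chain_of_addable:
  assumes "upper_set k ns S"
  shows "inj_on (chain_of k ns) {x. x \<notin> S \<and> upper_set k ns (insert x S)}"
proof (rule inj_onI)
  fix x y
  assume x: "x \<in> {x. x \<notin> S \<and> upper_set k ns (insert x S)}"
    and y: "y \<in> {x. x \<notin> S \<and> upper_set k ns (insert x S)}"
    and same: "chain_of k ns x = chain_of k ns y"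
  have "x \<in> ground k ns" "y \<in> ground k ns"
    using x y unfolding upper_set_def by auto
  have "\<not> prec k ns x y" "\<not> prec k ns y x"
    using x y assms \<open>x \<in> ground k ns\<close> \<open>y \<in> ground k ns\<close> by (auto simp: upper_set_insert_iff)
  then show "x = y"
    using same \<open>x \<in> ground k ns\<close> \<open>y \<in> ground k ns\<close> prec_iff by (metis linorder_neqE_nat)
qed

lemma chain_of_addable_image:
  assumes "upper_set k ns S"
  shows "chain_of k ns ` {x. x \<notin> S \<and> upper_set k ns (insert x S)} = chain_of k ns ` (ground k ns - S)"
proof
  show "chain_of k ns ` {x. x \<notin> S \<and> upper_set k ns (insert x S)} \<subseteq> chain_of k ns ` (ground k ns - S)"
    unfolding upper_set_def by auto
next
  show "chain_of k ns ` (ground k ns - S) \<subseteq> chain_of k ns ` {x. x \<notin> S \<and> upper_set k ns (insert x S)}"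
  proof
    fix c assume "c \<in> chain_of k ns ` (ground k ns - S)"
    define B where "B = {z \<in> ground k ns - S. chain_of k ns z = c}"
    have "finite B" "B \<noteq> {}" "B \<subseteq> ground k ns"
      using \<open>c \<in> chain_of k ns ` (ground k ns - S)\<close> unfolding B_def by auto
    moreover have "b \<in> S \<union> B" if "prec k ns (Max B) b" for b
      using that Max_in[OF calculation(1,2)] unfolding B_def prec_iff by auto
    ultimately have "upper_set k ns (insert (Max B) S)"
      by (rule upper_set_insert_Max[OF assms])
    moreover have "Max B \<in> B"
      using Max_in \<open>finite B\<close> \<open>B \<noteq> {}\<close> by blast
    ultimately show "c \<in> chain_of k ns ` {x. x \<notin> S \<and> upper_set k ns (insert x S)}"
      unfolding B_def by (auto intro!: image_eqI)
  qed
qed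

lemma sum_addable_chain_of:
  assumes "upper_set k ns S"
  shows "(\<Sum>x\<in>{x. x \<notin> S \<and> upper_set k ns (insert x S)}. g (chain_of k ns x))
       = (\<Sum>c\<in>set_mset (chain_labels k ns (ground k ns - S)). g c)"
  using sum.reindex[OF inj_on_chain_of_addable[OF assms], of g] chain_of_addable_image[OF assms]
  by (simp add: set_mset_chain_labels)

theorem f_interval_eq_card_permutations:
  assumes "upper_set k ns S"
  shows "f_interval k ns S = card (permutations_of_multiset (chain_labels k ns (ground k ns - S)))"
  using assms
proof (induction "card (ground k ns - S)" arbitrary: S rule: less_induct)
  case less
  define D where "D = chain_labels k ns (ground k ns - S)"
  have S_sub: "S \<subseteq> ground k ns"
    using less.prems unfolding upper_set_def by blast
  show ?case
  proof (cases "S = ground k ns")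
    case True
    then show ?thesis
      by (simp add: f_interval_ground chain_labels_def)
  next
    case False
    have IH: "f_interval k ns (insert x S) = card (permutations_of_multiset (D - {#chain_of k ns x#}))"
      if "x \<notin> S" "upper_set k ns (insert x S)" for x
    proof -
      have x: "x \<in> ground k ns - S"
        using that unfolding upper_set_def by auto
      have remove: "ground k ns - insert x S = (ground k ns - S) - {x}"
        by blast
      have "card ((ground k ns - S) - {x}) < card (ground k ns - S)"
        using x by (intro card_Diff1_less) auto
      then show ?thesis
        using less.hyps[OF _ that(2)] chain_labels_remove[of "ground k ns - S" x] x
        unfolding remove D_def by simp
    qed
    have "D \<noteq> {#}"
      using False S_sub unfolding D_def chain_labels_def by (auto simp: mset_set_empty_iff)
    have "f_interval k ns S = (\<Sum>x\<in>{x. x \<notin> S \<and> upper_set k ns (insert x S)}.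
        card (permutations_of_multiset (D - {#chain_of k ns x#})))"
      unfolding f_interval_rec[OF less.prems False] using IH by simp
    also have "\<dots> = (\<Sum>c\<in>set_mset D. card (permutations_of_multiset (D - {#c#})))"
      unfolding D_def by (rule sum_addable_chain_of[OF less.prems])
    also have "\<dots> = card (permutations_of_multiset D)"
      using card_permutations_of_multiset_rec[OF \<open>D \<noteq> {#}\<close>] by simp
    finally show ?thesis
      unfolding D_def .
  qed
qed

section \<open>Linear extensions as words\<close>

lemma count_chain_labels_ground: "i \<in> {1..k} \<Longrightarrow> count (chain_labels k ns (ground k ns)) i = ns i"
  unfolding chain_labels_def
  by (simp add: count_image_mset_eq_card_vimage chain_block_eq chain_block_def)

lemma size_chain_labels_ground: "size (chain_labels k ns (ground k ns)) = chain_offset ns (Suc k)"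
  unfolding chain_labels_def by (simp add: ground_eq)

definition chain_word :: "nat \<Rightarrow> (nat \<Rightarrow> nat) \<Rightarrow> (nat \<Rightarrow> nat) \<Rightarrow> nat list" where
  "chain_word k ns \<pi> = map (\<lambda>p. chain_of k ns (\<pi> p)) [1..<Suc (chain_offset ns (Suc k))]"

text \<open>
  Inverse of \<open>chain_word\<close>: if letter \<open>p\<close> is \<open>c\<close> and it is the \<open>j\<close>-th occurrence of \<open>c\<close>, then
  position \<open>p\<close> carries the \<open>j\<close>-th element of chain \<open>c\<close>.
\<close>
definition decode_chain_word :: "nat \<Rightarrow> (nat \<Rightarrow> nat) \<Rightarrow> nat list \<Rightarrow> nat \<Rightarrow> nat" where
  "decode_chain_word k ns w p =
     (if p \<in> ground k ns then chain_offset ns (w ! (p - 1)) + count_list (take p w) (w ! (p - 1))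
      else p)"

lemma length_chain_word: "length (chain_word k ns \<pi>) = chain_offset ns (Suc k)"
  unfolding chain_word_def by simp

lemma nth_chain_word:
  "q < chain_offset ns (Suc k) \<Longrightarrow> chain_word k ns \<pi> ! q = chain_of k ns (\<pi> (Suc q))"
  unfolding chain_word_def by (simp del: upt_Suc)

lemma count_list_map_upt: "count_list (map f [a..<b]) c = card {q \<in> {a..<b}. f q = c}"
proof -
  have "count_list (map f [a..<b]) c = card ({q. c = f q} \<inter> set [a..<b])"
    unfolding count_list_eq_length_filter filter_map length_map comp_def
    by (rule distinct_length_filter) simp
  also have "\<dots> = card {q \<in> {a..<b}. f q = c}"
    by (rule arg_cong[where f = card]) auto
  finally show ?thesis .
qed

lemma mset_chain_word:
  assumes "\<pi> permutes ground k ns"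
  shows "mset (chain_word k ns \<pi>) = chain_labels k ns (ground k ns)"
proof -
  have "mset (chain_word k ns \<pi>) = image_mset (chain_of k ns \<circ> \<pi>) (mset_set (ground k ns))"
    unfolding chain_word_def mset_map ground_eq
    by (simp del: upt_Suc add: atLeastLessThanSuc_atLeastAtMost comp_def)
  also have "\<dots> = image_mset (chain_of k ns) (mset_set (\<pi> ` ground k ns))"
    using permutes_inj_on[OF assms] by (simp add: image_mset_mset_set flip: multiset.map_comp)
  finally show ?thesis
    unfolding chain_labels_def permutes_image[OF assms] .
qed

lemma linear_extension_le_iff:
  assumes le: "linear_extension k ns \<pi>" and "p \<in> ground k ns" "q \<in> ground k ns"
    and same: "chain_of k ns (\<pi> q) = chain_of k ns (\<pi> p)"
  shows "\<pi> q \<le> \<pi> p \<longleftrightarrow> q \<le> p"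
proof -
  have perm: "\<pi> permutes ground k ns" and ord: "\<And>a b. prec k ns a b \<Longrightarrow> inv \<pi> a < inv \<pi> b"
    using le unfolding linear_extension_def by blast+
  have ground: "\<pi> p \<in> ground k ns" "\<pi> q \<in> ground k ns"
    using assms(2,3) permutes_in_image[OF perm] by auto
  have inv: "inv \<pi> (\<pi> x) = x" for x
    using permutes_inverses(2)[OF perm] .
  have "q < p" if "\<pi> q < \<pi> p"
    using ord[of "\<pi> q" "\<pi> p"] that ground same unfolding prec_iff inv by simp
  moreover have "p < q" if "\<pi> p < \<pi> q"
    using ord[of "\<pi> p" "\<pi> q"] that ground same unfolding prec_iff inv by simp
  moreover have "q = p" if "\<pi> q = \<pi> p"
    using that inv by metis
  ultimately show ?thesis
    by (metis linorder_neqE_nat nat_less_le not_le)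
qed

lemma linear_extension_chain_prefix:
  assumes le: "linear_extension k ns \<pi>" and p: "p \<in> ground k ns"
  defines "c \<equiv> chain_of k ns (\<pi> p)"
  shows "\<pi> ` {q \<in> {1..p}. chain_of k ns (\<pi> q) = c} = {chain_offset ns c + 1..\<pi> p}"
proof -
  have perm: "\<pi> permutes ground k ns"
    using le unfolding linear_extension_def by blast
  have \<pi>p: "c \<in> {1..k}" "\<pi> p \<in> chain_block ns c"
    using permutes_in_image[OF perm] p chain_of_in_chain_block unfolding c_def by auto
  show ?thesis
  proof
    show "\<pi> ` {q \<in> {1..p}. chain_of k ns (\<pi> q) = c} \<subseteq> {chain_offset ns c + 1..\<pi> p}"
    proof (rule image_subsetI)
      fix q assume "q \<in> {q \<in> {1..p}. chain_of k ns (\<pi> q) = c}"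
      then have q: "q \<in> ground k ns" "chain_of k ns (\<pi> q) = c" "q \<le> p"
        using p unfolding ground_eq by auto
      then have "\<pi> q \<in> chain_block ns c"
        using chain_of_in_chain_block permutes_in_image[OF perm] by metis
      then show "\<pi> q \<in> {chain_offset ns c + 1..\<pi> p}"
        using linear_extension_le_iff[OF le p q(1)] q unfolding c_def chain_block_def by auto
    qed
    show "{chain_offset ns c + 1..\<pi> p} \<subseteq> \<pi> ` {q \<in> {1..p}. chain_of k ns (\<pi> q) = c}"
    proof
      fix y assume y: "y \<in> {chain_offset ns c + 1..\<pi> p}"
      define q where "q = inv \<pi> y"
      have "y \<in> chain_block ns c"
        using y \<pi>p(2) unfolding chain_block_def by auto
      then have "y \<in> ground k ns" and "chain_of k ns y = c"
        using chain_block_subset_ground[OF \<pi>p(1)] chain_of_eq[OF \<pi>p(1)] by auto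
      moreover have "\<pi> q = y" "q \<in> ground k ns"
        using permutes_inverses(1)[OF perm] permutes_in_image[OF permutes_inv[OF perm]]
          \<open>y \<in> ground k ns\<close> unfolding q_def by auto
      ultimately have "q \<le> p" "1 \<le> q"
        using linear_extension_le_iff[OF le p, of q] y unfolding c_def ground_eq by auto
      then show "y \<in> \<pi> ` {q \<in> {1..p}. chain_of k ns (\<pi> q) = c}"
        using \<open>\<pi> q = y\<close> \<open>chain_of k ns y = c\<close> by auto
    qed
  qed
qed

lemma decode_chain_word_chain_word:
  assumes le: "linear_extension k ns \<pi>" and p: "p \<in> ground k ns"
  shows "decode_chain_word k ns (chain_word k ns \<pi>) p = \<pi> p"
proof -
  define c where "c = chain_of k ns (\<pi> p)"
  have perm: "\<pi> permutes ground k ns"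
    using le unfolding linear_extension_def by blast
  have p_le: "1 \<le> p" "p \<le> chain_offset ns (Suc k)"
    using p unfolding ground_eq by auto
  have nth: "chain_word k ns \<pi> ! (p - 1) = c"
    using nth_chain_word[of "p - 1" ns k \<pi>] p_le unfolding c_def by simp
  have "take p (chain_word k ns \<pi>) = map (\<lambda>q. chain_of k ns (\<pi> q)) [1..<Suc p]"
    unfolding chain_word_def using p_le by (simp del: upt_Suc add: take_map take_upt)
  then have "count_list (take p (chain_word k ns \<pi>)) c = card {q \<in> {1..p}. chain_of k ns (\<pi> q) = c}"
    by (simp del: upt_Suc add: count_list_map_upt atLeastLessThanSuc_atLeastAtMost)
  also have "\<dots> = card (\<pi> ` {q \<in> {1..p}. chain_of k ns (\<pi> q) = c})"
    by (rule card_image[symmetric, OF permutes_inj_on[OF perm]])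
  also have "\<dots> = \<pi> p - chain_offset ns c"
    unfolding linear_extension_chain_prefix[OF le p, folded c_def] by simp
  finally have count: "count_list (take p (chain_word k ns \<pi>)) c = \<pi> p - chain_offset ns c" .
  have "chain_offset ns c < \<pi> p"
    using chain_of_in_chain_block[of "\<pi> p" k ns] permutes_in_image[OF perm] p
    unfolding c_def chain_block_def by auto
  then show ?thesis
    unfolding decode_chain_word_def using p nth count by simp
qed

lemma count_list_take_mono: "p \<le> q \<Longrightarrow> count_list (take p w) c \<le> count_list (take q w) c"
  by (metis count_list_append le_add1 le_add_diff_inverse take_add)

lemma count_list_take_Suc:
  "q < length w \<Longrightarrow> count_list (take (Suc q) w) c = count_list (take q w) c + (if w ! q = c then 1 else 0)"
  by (simp add: take_Suc_conv_app_nth)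

lemma count_list_take_less:
  assumes "p < p'" "p' \<le> length w" "w ! (p' - 1) = c"
  shows "count_list (take p w) c < count_list (take p' w) c"
proof -
  have "count_list (take p w) c \<le> count_list (take (p' - 1) w) c"
    using assms(1) by (intro count_list_take_mono) simp
  also have "\<dots> < count_list (take (Suc (p' - 1)) w) c"
    using assms by (subst count_list_take_Suc) auto
  finally show ?thesis
    using assms(1) by simp
qed

context
  fixes k :: nat and ns :: "nat \<Rightarrow> nat" and w :: "nat list"
  assumes w: "mset w = chain_labels k ns (ground k ns)"
begin

lemma length_word_of_chain_labels: "length w = chain_offset ns (Suc k)"
  using arg_cong[OF w, of size] size_chain_labels_ground by simp

lemma nth_word_of_chain_labels:
  assumes "p \<in> ground k ns"
  shows "p - 1 < length w" "w ! (p - 1) \<in> {1..k}"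
proof -
  show "p - 1 < length w"
    using assms length_word_of_chain_labels unfolding ground_eq by auto
  then have "w ! (p - 1) \<in> set_mset (chain_labels k ns (ground k ns))"
    unfolding w[symmetric] by simp
  then show "w ! (p - 1) \<in> {1..k}"
    using chain_of_in_chain_block by (auto simp: set_mset_chain_labels)
qed

lemma decode_chain_word_in_chain_block:
  assumes "p \<in> ground k ns"
  shows "decode_chain_word k ns w p \<in> chain_block ns (w ! (p - 1))"
proof -
  define c where "c = w ! (p - 1)"
  have p: "p - 1 < length w" "c \<in> {1..k}" "1 \<le> p"
    using nth_word_of_chain_labels[OF assms] assms unfolding c_def ground_eq by auto
  have "0 < count_list (take p w) c"
    using count_list_take_less[of 0 p w c] p unfolding c_def by simp
  moreover have "count_list (take p w) c \<le> count_list w c"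
    using count_list_take_mono[of p "length w" w c] p by simp
  moreover have "count_list w c = ns c"
    using count_chain_labels_ground[OF p(2), of ns] unfolding w[symmetric] by (simp add: count_mset)
  ultimately show ?thesis
    using assms unfolding decode_chain_word_def chain_block_def c_def by simp
qed

lemma chain_of_decode_chain_word:
  "p \<in> ground k ns \<Longrightarrow> chain_of k ns (decode_chain_word k ns w p) = w ! (p - 1)"
  using chain_of_eq nth_word_of_chain_labels decode_chain_word_in_chain_block by blast

lemma decode_chain_word_permutes: "decode_chain_word k ns w permutes ground k ns"
proof (rule bij_imp_permutes)
  let ?d = "decode_chain_word k ns w"
  have maps: "?d p \<in> ground k ns" if "p \<in> ground k ns" for p
    using decode_chain_word_in_chain_block[OF that] chain_block_subset_ground nth_word_of_chain_labels[OF that]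
    by blast
  have "inj_on ?d (ground k ns)"
  proof (rule inj_onI)
    fix p p' assume p: "p \<in> ground k ns" and p': "p' \<in> ground k ns" and eq: "?d p = ?d p'"
    then have c: "w ! (p - 1) = w ! (p' - 1)"
      using chain_of_decode_chain_word by metis
    then have "count_list (take p w) (w ! (p - 1)) = count_list (take p' w) (w ! (p - 1))"
      using eq p p' unfolding decode_chain_word_def by simp
    moreover have "p \<le> length w" "p' \<le> length w"
      using p p' length_word_of_chain_labels unfolding ground_eq by auto
    ultimately show "p = p'"
      using count_list_take_less[of p p' w] count_list_take_less[of p' p w] c
      by (metis less_irrefl linorder_neqE_nat)
  qed
  moreover have "?d ` ground k ns = ground k ns"
    using endo_inj_surj[OF finite_ground _ calculation] maps by blast
  ultimately show "bij_betw ?d (ground k ns) (ground k ns)"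
    unfolding bij_betw_def by blast
  show "?d p = p" if "p \<notin> ground k ns" for p
    using that unfolding decode_chain_word_def by simp
qed

lemma linear_extension_decode_chain_word: "linear_extension k ns (decode_chain_word k ns w)"
  unfolding linear_extension_def
proof (intro conjI allI impI decode_chain_word_permutes)
  let ?d = "decode_chain_word k ns w"
  note perm = decode_chain_word_permutes
  fix a b assume "prec k ns a b"
  then have ab: "a \<in> ground k ns" "b \<in> ground k ns" "chain_of k ns a = chain_of k ns b" "a < b"
    unfolding prec_iff by auto
  define p p' where "p = inv ?d a" and "p' = inv ?d b"
  have "?d p = a" "?d p' = b" "p \<in> ground k ns" "p' \<in> ground k ns"
    using permutes_inverses(1)[OF perm] permutes_in_image[OF permutes_inv[OF perm]] ab
    unfolding p_def p'_def by auto
  moreover have "w ! (p - 1) = chain_of k ns a" "w ! (p' - 1) = chain_of k ns a"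
    using chain_of_decode_chain_word calculation ab(3) by metis+
  ultimately have "\<not> p' \<le> p"
    using ab(4) count_list_take_mono[of p' p w "chain_of k ns a"]
    unfolding decode_chain_word_def by auto
  then show "inv ?d a < inv ?d b"
    unfolding p_def p'_def by simp
qed

lemma chain_word_decode_chain_word: "chain_word k ns (decode_chain_word k ns w) = w"
proof (rule nth_equalityI)
  show "length (chain_word k ns (decode_chain_word k ns w)) = length w"
    using length_word_of_chain_labels length_chain_word by simp
  fix q assume "q < length (chain_word k ns (decode_chain_word k ns w))"
  then have "q < chain_offset ns (Suc k)" "Suc q \<in> ground k ns"
    unfolding length_chain_word ground_eq by auto
  then show "chain_word k ns (decode_chain_word k ns w) ! q = w ! q"
    using nth_chain_word chain_of_decode_chain_word by simp
qed

end

lemma inj_on_chain_word: "inj_on (chain_word k ns) {\<pi>. linear_extension k ns \<pi>}"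
proof (rule inj_onI, rule ext)
  fix \<pi> \<sigma> p
  assume "\<pi> \<in> {\<pi>. linear_extension k ns \<pi>}" "\<sigma> \<in> {\<pi>. linear_extension k ns \<pi>}"
    and same: "chain_word k ns \<pi> = chain_word k ns \<sigma>"
  then have le: "linear_extension k ns \<pi>" "linear_extension k ns \<sigma>"
    by simp_all
  show "\<pi> p = \<sigma> p"
  proof (cases "p \<in> ground k ns")
    case True
    then show ?thesis
      using decode_chain_word_chain_word[OF le(1)] decode_chain_word_chain_word[OF le(2)] same by metis
  next
    case False
    then show ?thesis
      using le unfolding linear_extension_def by (metis permutes_not_in)
  qed
qed

theorem bij_betw_chain_word:
  "bij_betw (chain_word k ns) {\<pi>. linear_extension k ns \<pi>}
     (permutations_of_multiset (chain_labels k ns (ground k ns)))"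
  unfolding bij_betw_def
proof (intro conjI inj_on_chain_word equalityI subsetI)
  fix w assume "w \<in> chain_word k ns ` {\<pi>. linear_extension k ns \<pi>}"
  then show "w \<in> permutations_of_multiset (chain_labels k ns (ground k ns))"
    using mset_chain_word unfolding linear_extension_def by (auto intro: permutations_of_multisetI)
next
  fix w assume "w \<in> permutations_of_multiset (chain_labels k ns (ground k ns))"
  then have "mset w = chain_labels k ns (ground k ns)"
    by (rule permutations_of_multisetD)
  then show "w \<in> chain_word k ns ` {\<pi>. linear_extension k ns \<pi>}"
    using linear_extension_decode_chain_word chain_word_decode_chain_word
    by (metis (mono_tags) image_eqI mem_Collect_eq)
qed

section \<open>Fixed points of linear extensions\<close>

text \<open>Stated additively to avoid truncated subtraction.\<close>
lemma linear_extension_at_chain_position: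
  assumes le: "linear_extension k ns \<pi>" and q: "q < chain_offset ns (Suc k)"
    and i: "chain_word k ns \<pi> ! q = i"
  shows "\<pi> (Suc q) + length (filter (\<lambda>x. x \<noteq> i) (take q (chain_word k ns \<pi>))) = chain_offset ns i + Suc q"
proof -
  let ?w = "chain_word k ns \<pi>"
  have "Suc q \<in> ground k ns" "q < length ?w"
    using q unfolding ground_eq length_chain_word by auto
  then have "\<pi> (Suc q) = chain_offset ns i + count_list (take q ?w) i + 1"
    using decode_chain_word_chain_word[OF le, of "Suc q"] i count_list_take_Suc[of q ?w i]
    unfolding decode_chain_word_def by simp
  moreover have "count_list (take q ?w) i + length (filter (\<lambda>x. x \<noteq> i) (take q ?w)) = q"
    using sum_length_filter_compl[of "(=) i" "take q ?w"] \<open>q < length ?w\<close>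
    by (simp add: count_list_eq_length_filter eq_commute[of i])
  ultimately show ?thesis
    by simp
qed

lemma fixes_chain_iff_occurs_after_others:
  assumes le: "linear_extension k ns \<pi>" and i: "i \<in> {1..k}"
  shows "(\<exists>m\<in>chain_block ns i. \<pi> m = m) \<longleftrightarrow>
    occurs_after_others (chain_word k ns \<pi>) i (chain_offset ns i)"
proof
  assume "\<exists>m\<in>chain_block ns i. \<pi> m = m"
  then obtain m where m: "m \<in> chain_block ns i" "\<pi> m = m"
    by blast
  then have "m \<in> ground k ns"
    using chain_block_subset_ground[OF i] by blast
  then have q: "m - 1 < chain_offset ns (Suc k)" "Suc (m - 1) = m"
    unfolding ground_eq by auto
  then have "chain_word k ns \<pi> ! (m - 1) = i"
    using nth_chain_word m chain_of_eq[OF i] by metis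
  with linear_extension_at_chain_position[OF le q(1) this] m(2) q show
    "occurs_after_others (chain_word k ns \<pi>) i (chain_offset ns i)"
    unfolding occurs_after_others_def length_chain_word by auto
next
  assume "occurs_after_others (chain_word k ns \<pi>) i (chain_offset ns i)"
  then obtain q where q: "q < chain_offset ns (Suc k)" "chain_word k ns \<pi> ! q = i"
    and others: "length (filter (\<lambda>x. x \<noteq> i) (take q (chain_word k ns \<pi>))) = chain_offset ns i"
    unfolding occurs_after_others_def length_chain_word by blast
  have fixed: "\<pi> (Suc q) = Suc q"
    using linear_extension_at_chain_position[OF le q] others by simp
  have "Suc q \<in> ground k ns"
    using q(1) unfolding ground_eq by simp
  then have "Suc q \<in> chain_block ns (chain_of k ns (Suc q))"
    using chain_of_in_chain_block by blast
  moreover have "chain_of k ns (Suc q) = i"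
    using nth_chain_word[OF q(1)] q(2) fixed by simp
  ultimately show "\<exists>m\<in>chain_block ns i. \<pi> m = m"
    using fixed by metis
qed

lemma card_linear_extensions_fixing_chains:
  assumes "I \<subseteq> {1..k}"
  shows "card {\<pi>. linear_extension k ns \<pi> \<and> (\<forall>i\<in>I. \<exists>m\<in>chain_block ns i. \<pi> m = m)} =
    card {w \<in> permutations_of_multiset (chain_labels k ns (ground k ns)).
            \<forall>i\<in>I. occurs_after_others w i (chain_offset ns i)}"
proof (rule bij_betw_same_card)
  have "bij_betw (chain_word k ns)
      {\<pi> \<in> {\<pi>. linear_extension k ns \<pi>}. \<forall>i\<in>I. \<exists>m\<in>chain_block ns i. \<pi> m = m}
      {w \<in> permutations_of_multiset (chain_labels k ns (ground k ns)).
         \<forall>i\<in>I. occurs_after_others w i (chain_offset ns i)}"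
    by (rule bij_betw_Collect[OF bij_betw_chain_word])
      (use assms fixes_chain_iff_occurs_after_others in blast)
  then show "bij_betw (chain_word k ns)
      {\<pi>. linear_extension k ns \<pi> \<and> (\<forall>i\<in>I. \<exists>m\<in>chain_block ns i. \<pi> m = m)}
      {w \<in> permutations_of_multiset (chain_labels k ns (ground k ns)).
         \<forall>i\<in>I. occurs_after_others w i (chain_offset ns i)}"
    by simp
qed

lemma chain_top_in_chain_block:
  "1 \<le> ns i \<Longrightarrow> chain_offset ns i + ns i \<in> chain_block ns i"
  unfolding chain_block_def by simp

context
  fixes k :: nat and ns :: "nat \<Rightarrow> nat" and I :: "nat set"
  assumes nonempty: "\<forall>i\<in>{1..k}. ns i \<ge> 1" and I: "I \<subseteq> {1..k}"
begin

lemma chain_of_chain_top: "i \<in> I \<Longrightarrow> chain_of k ns (chain_offset ns i + ns i) = i"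
  using chain_of_eq chain_top_in_chain_block nonempty I by blast

lemma upper_set_chain_tops: "upper_set k ns {chain_offset ns i + ns i | i. i \<in> I}"
  unfolding upper_set_def
proof (intro conjI ballI allI impI)
  show "{chain_offset ns i + ns i | i. i \<in> I} \<subseteq> ground k ns"
    using chain_top_in_chain_block chain_block_subset_ground nonempty I by blast
  fix a b assume "a \<in> {chain_offset ns i + ns i | i. i \<in> I}" "prec k ns a b"
  then obtain i where "i \<in> I" "a = chain_offset ns i + ns i" "b \<in> ground k ns"
      "chain_of k ns b = i" "a < b"
    using chain_of_chain_top unfolding prec_iff by auto
  then have "b \<in> chain_block ns i"
    using chain_of_in_chain_block by metis
  then show "b \<in> {chain_offset ns i + ns i | i. i \<in> I}"
    using \<open>a = chain_offset ns i + ns i\<close> \<open>a < b\<close> unfolding chain_block_def by simp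
qed

lemma chain_labels_remove_chain_tops:
  "chain_labels k ns (ground k ns - {chain_offset ns i + ns i | i. i \<in> I}) =
     chain_labels k ns (ground k ns) - mset_set I"
proof -
  let ?tops = "{chain_offset ns i + ns i | i. i \<in> I}"
  have tops_sub: "?tops \<subseteq> ground k ns"
    using upper_set_chain_tops unfolding upper_set_def by blast
  have "inj_on (chain_of k ns) ?tops"
    by (rule inj_onI) (auto simp: chain_of_chain_top)
  moreover have "chain_of k ns ` ?tops = I"
    using chain_of_chain_top by (auto simp: image_iff) (metis (mono_tags, lifting) mem_Collect_eq)
  ultimately have "image_mset (chain_of k ns) (mset_set ?tops) = mset_set I"
    by (simp add: image_mset_mset_set)
  then show ?thesis
    unfolding chain_labels_def mset_set_Diff[OF finite_ground tops_sub]
    by (simp add: image_mset_Diff subset_imp_msubset_mset_set[OF tops_sub finite_ground])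
qed

lemma disjoint_windows_chain_offsets:
  "disjoint_windows (chain_labels k ns (ground k ns)) (chain_offset ns) I"
  unfolding disjoint_windows_def
proof (intro conjI)
  have count: "count (chain_labels k ns (ground k ns)) i = ns i" if "i \<in> I" for i
    using count_chain_labels_ground I that by blast
  show "I \<subseteq> set_mset (chain_labels k ns (ground k ns))"
    using count nonempty I by (force simp flip: count_greater_zero_iff)
  show "\<forall>i\<in>I. chain_offset ns i + count (chain_labels k ns (ground k ns)) i
      \<le> size (chain_labels k ns (ground k ns))"
  proof
    fix i assume "i \<in> I"
    then have "1 \<le> i" "i \<le> k"
      using I by auto
    then show "chain_offset ns i + count (chain_labels k ns (ground k ns)) i
        \<le> size (chain_labels k ns (ground k ns))"
      using count[OF \<open>i \<in> I\<close>] chain_offset_Suc[OF \<open>1 \<le> i\<close>, of ns]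
        chain_offset_mono[of "Suc i" "Suc k" ns]
      by (simp add: size_chain_labels_ground)
  qed
  have windows: "{chain_offset ns i<..chain_offset ns i + count (chain_labels k ns (ground k ns)) i}
      = chain_block ns i" if "i \<in> I" for i
    using count[OF that] unfolding chain_block_def by auto
  show "disjoint_family_on
      (\<lambda>i. {chain_offset ns i<..chain_offset ns i + count (chain_labels k ns (ground k ns)) i}) I"
    unfolding disjoint_family_on_def
  proof (intro ballI impI)
    fix i j assume "i \<in> I" "j \<in> I" "i \<noteq> j"
    moreover have "1 \<le> i" "1 \<le> j"
      using I \<open>i \<in> I\<close> \<open>j \<in> I\<close> by auto
    ultimately show "{chain_offset ns i<..chain_offset ns i + count (chain_labels k ns (ground k ns)) i} \<inter>
        {chain_offset ns j<..chain_offset ns j + count (chain_labels k ns (ground k ns)) j} = {}"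
      using windows chain_block_disjoint[of i j _ ns] by auto
  qed
qed

end

theorem lemma5p6:
  fixes k :: nat and ns :: "nat \<Rightarrow> nat" and I :: "nat set"
  assumes "\<forall>i\<in>{1..k}. ns i \<ge> 1"
    and "I \<subseteq> {1..k}"
  shows "f_interval k ns {chain_offset ns i + ns i | i. i \<in> I}
       = card {\<pi>. linear_extension k ns \<pi> \<and>
                 (\<forall>i\<in>I. \<exists>m\<in>chain_block ns i. \<pi> m = m)}"
proof -
  have "f_interval k ns {chain_offset ns i + ns i | i. i \<in> I}
      = card (permutations_of_multiset (chain_labels k ns (ground k ns) - mset_set I))"
    using f_interval_eq_card_permutations[OF upper_set_chain_tops[OF assms]]
    by (simp add: chain_labels_remove_chain_tops[OF assms])
  also have "\<dots> = card {w \<in> permutations_of_multiset (chain_labels k ns (ground k ns)).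
      \<forall>i\<in>I. occurs_after_others w i (chain_offset ns i)}"
    by (rule card_permutations_occurs_after_others[OF disjoint_windows_chain_offsets[OF assms], symmetric])
  also have "\<dots> = card {\<pi>. linear_extension k ns \<pi> \<and> (\<forall>i\<in>I. \<exists>m\<in>chain_block ns i. \<pi> m = m)}"
    by (rule card_linear_extensions_fixing_chains[OF assms(2), symmetric])
  finally show ?thesis .
qed

end
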